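(* Let $C\in\mathbb{R}$ with $C\le 3$ and a map $\alpha\colon\,]0,\infty[\,\to\,]0,\infty[$, $\lambda\mapsto\alpha_\lambda$, be such that: for every $\lambda>0$, every real-valued strong solution $Z^\lambda$ of $\mathrm dZ^\lambda_t=-\lambda Z^\lambda_t\,\mathrm dt+\mathrm dW_t$, $Z^\lambda_0=0$ ($W$ a one-dimensional standard Brownian motion), and every Borel measurable $b\colon[0,1]\times\mathbb{R}\to H$ twice continuously differentiable in the second variable with $\sup_{t,x}|b(t,x)|_H\le 1$, one has $\mathbb{E}\exp\big(\alpha_\lambda|\int_0^1 b'(t,Z^\lambda_t)\,\mathrm dt|_H^2\big)\le C$ (with $b'$ the derivative in the second variable). Then for every Borel measurable function $b\colon[0,1]\times H\to H$ which is twice continuously differentiable in the second variable and satisfies $\|b\|_\infty:=\sup_{t\in[0,1],x\in H}|b(t,x)|_H\leq 1$, we have \[ \mathbb{E}\exp\left(\alpha_{\lambda_i}\left|\int_0^1\partial_{x_i}b(t,Z^A_t)\,\mathrm dt\right|_H^2\right)\leq C\leq 3\qquad\text{for all } i\in\mathbb{N}, \] where $\partial_{x_i}b$ denotes the derivative of $b$ with respect to the $i$-th coordinate $x_i=\langle x,e_i\rangle$ of the second variable.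
   Context: $H$ is a separable real Hilbert space with orthonormal basis $(e_n)_{n\in\mathbb{N}}$, identified with $\ell^2\subseteq\mathbb{R}^{\mathbb{N}}$ via this basis. $(\Omega,\mathcal F,(\mathcal F_t)_{t\ge0},\mathbb P)$ is a filtered probability space with right-continuous normal filtration carrying a cylindrical $\mathcal F_t$-Brownian motion $B=(B^{(n)})_{n\in\mathbb{N}}$ with values in $\mathbb{R}^{\mathbb{N}}$ (independent standard one-dimensional Brownian motions). $A\colon D(A)\to H$ is a positive definite, self-adjoint, closed, densely defined operator with $A^{-1}$ trace class and $Ae_n=\lambda_n e_n$, $\lambda_n>0$ for all $n$. $Z^A$ is the $H$-valued Ornstein–Uhlenbeck process with continuous paths, the strong solution of $\mathrm dZ^A_t=-AZ^A_t\,\mathrm dt+\mathrm dB_t$, $Z^A_0=0$. *)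

theory Defs
  imports "HOL-Analysis.Analysis" "HOL-Probability.Probability"
begin

definition filtration_on :: "'w measure \<Rightarrow> (real \<Rightarrow> 'w measure) \<Rightarrow> bool" where
  "filtration_on M F \<longleftrightarrow>
     (\<forall>t. subalgebra M (F t)) \<and> (\<forall>s t. 0 \<le> s \<longrightarrow> s \<le> t \<longrightarrow> sets (F s) \<subseteq> sets (F t))"

definition usual_conditions :: "'w measure \<Rightarrow> (real \<Rightarrow> 'w measure) \<Rightarrow> bool" where
  "usual_conditions M F \<longleftrightarrow>
     (\<forall>t\<ge>0. sets (F t) = (\<Inter>s\<in>{t<..}. sets (F s))) \<and>
     (\<forall>A. A \<subseteq> space M \<longrightarrow> (\<exists>N\<in>sets M. A \<subseteq> N \<and> emeasure M N = 0) \<longrightarrow> A \<in> sets (F 0))"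

definition adapted :: "(real \<Rightarrow> 'w measure) \<Rightarrow> (real \<Rightarrow> 'w \<Rightarrow> 'b::topological_space) \<Rightarrow> bool" where
  "adapted F X \<longleftrightarrow> (\<forall>t\<ge>0. X t \<in> borel_measurable (F t))"

definition std_BM :: "'w measure \<Rightarrow> (real \<Rightarrow> 'w measure) \<Rightarrow> (real \<Rightarrow> 'w \<Rightarrow> real) \<Rightarrow> bool" where
  "std_BM M F W \<longleftrightarrow>
     adapted F W \<and>
     (\<forall>\<omega>\<in>space M. W 0 \<omega> = 0 \<and> continuous_on {0..} (\<lambda>t. W t \<omega>)) \<and>
     (\<forall>s t. 0 \<le> s \<longrightarrow> s < t \<longrightarrow>
        distributed M lborel (\<lambda>\<omega>. W t \<omega> - W s \<omega>) (\<lambda>x. ennreal (normal_density 0 (sqrt (t - s)) x)) \<and>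
        prob_space.indep_set M (sets (F s))
          {(\<lambda>\<omega>. W t \<omega> - W s \<omega>) -` A \<inter> space M | A. A \<in> sets borel})"

definition cyl_BM :: "'w measure \<Rightarrow> (real \<Rightarrow> 'w measure) \<Rightarrow> (nat \<Rightarrow> real \<Rightarrow> 'w \<Rightarrow> real) \<Rightarrow> bool" where
  "cyl_BM M F B \<longleftrightarrow>
     (\<forall>n. std_BM M F (B n)) \<and>
     prob_space.indep_vars M (\<lambda>_. Pi\<^sub>M {0..} (\<lambda>_. borel))
        (\<lambda>n \<omega>. restrict (\<lambda>t. B n t \<omega>) {0..}) UNIV"

definition OU_solution :: "'w measure \<Rightarrow> (real \<Rightarrow> 'w measure) \<Rightarrow> real \<Rightarrow>
    (real \<Rightarrow> 'w \<Rightarrow> real) \<Rightarrow> (real \<Rightarrow> 'w \<Rightarrow> real) \<Rightarrow> bool" where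
  "OU_solution M F lam W Z \<longleftrightarrow>
     adapted F Z \<and> (\<forall>\<omega>\<in>space M. continuous_on {0..} (\<lambda>t. Z t \<omega>)) \<and>
     (AE \<omega> in M. \<forall>t\<ge>0. Z t \<omega> = - lam * (LINT s:{0..t}|lborel. Z s \<omega>) + W t \<omega>)"

text \<open>H-valued Ornstein-Uhlenbeck process: strong solution of dZ = -A Z dt + dB, Z 0 = 0,
  where A e n = lam n * e n; written coordinatewise w.r.t. the orthonormal basis e.\<close>
definition OU_H_solution :: "'w measure \<Rightarrow> (real \<Rightarrow> 'w measure) \<Rightarrow> (nat \<Rightarrow> 'h::real_inner) \<Rightarrow>
    (nat \<Rightarrow> real) \<Rightarrow> (nat \<Rightarrow> real \<Rightarrow> 'w \<Rightarrow> real) \<Rightarrow> (real \<Rightarrow> 'w \<Rightarrow> 'h) \<Rightarrow> bool" where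
  "OU_H_solution M F e lam B Z \<longleftrightarrow>
     adapted F Z \<and> (\<forall>\<omega>\<in>space M. continuous_on {0..} (\<lambda>t. Z t \<omega>)) \<and>
     (\<forall>n. AE \<omega> in M. \<forall>t\<ge>0.
        Z t \<omega> \<bullet> e n = - lam n * (LINT s:{0..t}|lborel. Z s \<omega> \<bullet> e n) + B n t \<omega>)"

definition C2 :: "('a::real_normed_vector \<Rightarrow> 'b::real_normed_vector) \<Rightarrow> bool" where
  "C2 f \<longleftrightarrow> (\<exists>f' f''.
      (\<forall>x. (f has_derivative blinfun_apply (f' x)) (at x)) \<and>
      (\<forall>x. (f' has_derivative blinfun_apply (f'' x)) (at x)) \<and>
      continuous_on UNIV f'')"

definition admissible_drift :: "(real \<Rightarrow> 'x::real_normed_vector \<Rightarrow> 'h::real_normed_vector) \<Rightarrow> bool" where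
  "admissible_drift b \<longleftrightarrow>
     (\<lambda>p. b (fst p) (snd p)) \<in> borel_measurable (restrict_space borel ({0..1} \<times> UNIV)) \<and>
     (\<forall>t\<in>{0..1}. C2 (b t)) \<and>
     (\<forall>t\<in>{0..1}. \<forall>x. norm (b t x) \<le> 1)"

end

theory Submission
  imports Defs
begin

text \<open>Write \<open>Z = \<langle>Z, e\<^sub>i\<rangle> e\<^sub>i + R\<close>. The coordinate \<open>\<langle>Z, e\<^sub>i\<rangle>\<close> is a one-dimensional
  Ornstein--Uhlenbeck process with rate \<open>\<lambda>\<^sub>i\<close> driven by \<open>B\<^sub>i\<close>, given pathwise by an explicit
  formula, while \<open>R\<close> is, up to a null set, a functional of the Brownian motions \<open>B\<^sub>j\<close>, \<open>j \<noteq> i\<close>,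
  and hence independent of \<open>B\<^sub>i\<close>. Freeze \<open>R\<close> at a continuous path \<open>r\<close>: the drift
  \<open>(t, z) \<mapsto> b t (z e\<^sub>i + r t)\<close> is admissible in one dimension and its derivative in \<open>z\<close> is
  the derivative of \<open>b\<close> in direction \<open>e\<^sub>i\<close> at \<open>z e\<^sub>i + r t\<close>, so the one-dimensional bound holds
  for every frozen \<open>r\<close>. Independence lets us integrate over \<open>B\<^sub>i\<close> first with \<open>R\<close> frozen, which gives the bound for
  the expectation.\<close>

section \<open>Orthonormal expansions\<close>

lemma orthonormal_sum_inner:
  fixes e :: "nat \<Rightarrow> 'h::real_inner"
  assumes orth: "\<And>i j. e i \<bullet> e j = (if i = j then 1 else 0)"
    and "finite A" "finite B"
  shows "(\<Sum>j\<in>A. c j *\<^sub>R e j) \<bullet> (\<Sum>k\<in>B. d k *\<^sub>R e k) = (\<Sum>j\<in>A\<inter>B. c j * d j)"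
proof -
  have "(\<Sum>j\<in>A. c j *\<^sub>R e j) \<bullet> (\<Sum>k\<in>B. d k *\<^sub>R e k) = (\<Sum>j\<in>A. c j * (e j \<bullet> (\<Sum>k\<in>B. d k *\<^sub>R e k)))"
    by (simp add: inner_sum_left)
  also have "\<dots> = (\<Sum>j\<in>A. \<Sum>k\<in>B. c j * d k * (if j = k then 1 else 0))"
    by (simp add: inner_sum_right orth sum_distrib_left mult_ac)
  also have "\<dots> = (\<Sum>j\<in>A. if j \<in> B then c j * d j else 0)"
    using assms(3) by (intro sum.cong refl) (simp add: sum.delta if_distrib cong: if_cong)
  also have "\<dots> = (\<Sum>j\<in>A\<inter>B. c j * d j)"
    using assms(2) by (simp add: sum.inter_restrict)
  finally show ?thesis .
qed

lemma norm_orthonormal_sum: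
  fixes e :: "nat \<Rightarrow> 'h::real_inner"
  assumes orth: "\<And>i j. e i \<bullet> e j = (if i = j then 1 else 0)" and "finite A"
  shows "norm (\<Sum>j\<in>A. c j *\<^sub>R e j) = sqrt (\<Sum>j\<in>A. (c j)\<^sup>2)"
  unfolding norm_eq_sqrt_inner using orthonormal_sum_inner[OF orth assms(2) assms(2)]
  by (simp add: power2_eq_square)

lemma bessel_inequality:
  fixes e :: "nat \<Rightarrow> 'h::real_inner"
  assumes orth: "\<And>i j. e i \<bullet> e j = (if i = j then 1 else 0)"
  shows "(\<Sum>j<n. (x \<bullet> e j)\<^sup>2) \<le> x \<bullet> x"
proof -
  define s where "s = (\<Sum>j<n. (x \<bullet> e j) *\<^sub>R e j)"
  have xs: "x \<bullet> s = (\<Sum>j<n. (x \<bullet> e j)\<^sup>2)" "s \<bullet> x = (\<Sum>j<n. (x \<bullet> e j)\<^sup>2)"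
    unfolding s_def by (simp_all add: inner_sum_right inner_sum_left power2_eq_square inner_commute)
  have ss: "s \<bullet> s = (\<Sum>j<n. (x \<bullet> e j)\<^sup>2)"
    unfolding s_def by (subst orthonormal_sum_inner[OF orth]) (auto simp: power2_eq_square)
  have "0 \<le> (x - s) \<bullet> (x - s)" by simp
  also have "\<dots> = x \<bullet> x - (\<Sum>j<n. (x \<bullet> e j)\<^sup>2)"
    by (simp add: inner_diff_left inner_diff_right xs ss)
  finally show ?thesis by simp
qed

lemma orthonormal_expansion_summable:
  fixes e :: "nat \<Rightarrow> 'h::{real_inner,banach}"
  assumes orth: "\<And>i j. e i \<bullet> e j = (if i = j then 1 else 0)"
  shows "summable (\<lambda>j. (x \<bullet> e j) *\<^sub>R e j)"
proof -
  have coeffs: "summable (\<lambda>j. (x \<bullet> e j)\<^sup>2)"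
    by (rule summableI_nonneg_bounded[where x="x \<bullet> x"]) (auto intro: bessel_inequality[OF orth])
  show ?thesis
  proof (rule summable_Cauchy[THEN iffD2], intro allI impI)
    fix \<epsilon> :: real assume "\<epsilon> > 0"
    then obtain N where N: "\<And>m n. N \<le> m \<Longrightarrow> norm (\<Sum>j=m..<n. (x \<bullet> e j)\<^sup>2) < \<epsilon>\<^sup>2"
      using summable_Cauchy[THEN iffD1, OF coeffs, rule_format, of "\<epsilon>\<^sup>2"] by auto
    have "norm (\<Sum>j=m..<n. (x \<bullet> e j) *\<^sub>R e j) < \<epsilon>" if "N \<le> m" for m n
    proof -
      have "norm (\<Sum>j=m..<n. (x \<bullet> e j) *\<^sub>R e j) = sqrt (\<Sum>j=m..<n. (x \<bullet> e j)\<^sup>2)"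
        by (rule norm_orthonormal_sum[OF orth]) simp
      also have "\<dots> < sqrt (\<epsilon>\<^sup>2)"
        using N[OF that, of n] by (intro real_sqrt_less_mono) (simp add: sum_nonneg)
      finally show ?thesis using \<open>\<epsilon> > 0\<close> by simp
    qed
    then show "\<exists>N. \<forall>m\<ge>N. \<forall>n. norm (\<Sum>j=m..<n. (x \<bullet> e j) *\<^sub>R e j) < \<epsilon>" by blast
  qed
qed

lemma orthonormal_basis_expansion:
  fixes e :: "nat \<Rightarrow> 'h::{real_inner,banach}"
  assumes orth: "\<And>i j. e i \<bullet> e j = (if i = j then 1 else 0)"
    and total: "closure (span (range e)) = UNIV"
  shows "(\<lambda>n. \<Sum>j<n. (x \<bullet> e j) *\<^sub>R e j) \<longlonglongrightarrow> x"
proof -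
  define y where "y = (\<Sum>j. (x \<bullet> e j) *\<^sub>R e j)"
  have partial: "(\<lambda>n. \<Sum>j<n. (x \<bullet> e j) *\<^sub>R e j) \<longlonglongrightarrow> y"
    unfolding y_def by (rule summable_LIMSEQ[OF orthonormal_expansion_summable[OF orth]])
  have "y \<bullet> e k = x \<bullet> e k" for k
  proof -
    have "(\<lambda>n. (\<Sum>j<n. (x \<bullet> e j) *\<^sub>R e j) \<bullet> e k) \<longlonglongrightarrow> y \<bullet> e k"
      by (intro tendsto_intros partial)
    moreover have "\<forall>\<^sub>F n in sequentially. (\<Sum>j<n. (x \<bullet> e j) *\<^sub>R e j) \<bullet> e k = x \<bullet> e k"
      using eventually_gt_at_top[of k] by eventually_elim (simp add: inner_sum_left orth if_distrib cong: if_cong)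
    then have "(\<lambda>n. (\<Sum>j<n. (x \<bullet> e j) *\<^sub>R e j) \<bullet> e k) \<longlonglongrightarrow> x \<bullet> e k"
      by (rule tendsto_eventually)
    ultimately show ?thesis by (rule LIMSEQ_unique)
  qed
  then have "orthogonal (x - y) z" if "z \<in> span (range e)" for z
    by (intro orthogonal_to_span[OF that]) (auto simp: orthogonal_def inner_diff_left)
  then have "(x - y) \<bullet> z = 0" if "z \<in> span (range e)" for z
    using that by (simp add: orthogonal_def)
  then have "closure (span (range e)) \<subseteq> {z. (x - y) \<bullet> z = 0}"
    by (intro closure_minimal) (auto intro!: closed_Collect_eq continuous_intros)
  then have "(x - y) \<bullet> (x - y) = 0" using total by blast
  then show ?thesis using partial by simp
qed

lemma borel_measurable_orthonormal_coordinates: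
  fixes e :: "nat \<Rightarrow> 'h::{real_inner,banach,second_countable_topology}" and f :: "'a \<Rightarrow> 'h"
  assumes orth: "\<And>i j. e i \<bullet> e j = (if i = j then 1 else 0)"
    and total: "closure (span (range e)) = UNIV"
    and coord: "\<And>j. (\<lambda>x. f x \<bullet> e j) \<in> borel_measurable N"
  shows "f \<in> borel_measurable N"
proof (rule borel_measurable_LIMSEQ_metric)
  show "(\<lambda>x. \<Sum>j<n. (f x \<bullet> e j) *\<^sub>R e j) \<in> borel_measurable N" for n
    using coord by measurable
  show "(\<lambda>n. \<Sum>j<n. (f x \<bullet> e j) *\<^sub>R e j) \<longlonglongrightarrow> f x" for x
    by (rule orthonormal_basis_expansion[OF orth total])
qed

section \<open>The pathwise Ornstein--Uhlenbeck process\<close>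

lemma set_integral_Icc_eq_integral:
  fixes f :: "real \<Rightarrow> real"
  assumes "continuous_on {a..b} f"
  shows "(LINT s:{a..b}|lborel. f s) = integral {a..b} f"
  using set_borel_integral_eq_integral(2)[OF borel_integrable_atLeastAtMost'[OF assms]] .

lemma continuous_on_atLeast_if_atLeastAtMost:
  fixes f :: "real \<Rightarrow> 'b::topological_space"
  assumes "\<And>T. T \<ge> a \<Longrightarrow> continuous_on {a..T} f"
  shows "continuous_on {a..} f"
  unfolding continuous_on_eq_continuous_within
proof
  fix t :: real assume t: "t \<in> {a..}"
  have "continuous (at t within {a..t+1}) f"
    using assms[of "t+1"] t by (auto simp: continuous_on_eq_continuous_within)
  moreover have "at t within {a..t+1} = at t within {a..}"
    by (rule at_within_nhd[of _ "{..<t+1}"]) (use t in auto)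
  ultimately show "continuous (at t within {a..}) f" by simp
qed

text \<open>Integrating \<open>\<integral>\<^sub>0\<^sup>t exp (- l (t - s)) dw(s)\<close> by parts: the Ornstein--Uhlenbeck process
  driven by the path \<open>w\<close>, without a stochastic integral.\<close>
definition ou_path :: "real \<Rightarrow> (real \<Rightarrow> real) \<Rightarrow> real \<Rightarrow> real" where
  "ou_path l w t = w t - l * exp (- l * t) * (LINT s:{0..t}|lborel. exp (l * s) * w s)"

lemma integral_equation_solution_eq_ou_path:
  fixes x w :: "real \<Rightarrow> real" and l :: real
  assumes cx: "continuous_on {0..} x" and cw: "continuous_on {0..} w"
    and eq: "\<forall>t\<ge>0. x t = - l * (LINT s:{0..t}|lborel. x s) + w t"
    and T: "T \<ge> 0"
  shows "x T = ou_path l w T"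
proof -
  have cx': "continuous_on {0..T} x" by (rule continuous_on_subset[OF cx]) auto
  have cw': "continuous_on {0..T} (\<lambda>s. exp (l * s) * w s)"
    by (intro continuous_intros continuous_on_subset[OF cw]) auto
  define u where "u t = integral {0..t} x" for t
  define I where "I t = integral {0..t} (\<lambda>s. exp (l * s) * w s)" for t
  have xu: "x t = - l * u t + w t" if "t \<in> {0..T}" for t
    using eq that continuous_on_subset[OF cx', of "{0..t}"] unfolding u_def
    by (simp add: set_integral_Icc_eq_integral)
  text \<open>Variation of constants: \<open>u' = x = - l u + w\<close>.\<close>
  have deriv0: "((\<lambda>t. exp (l * t) * u t - I t) has_field_derivative 0) (at t within {0..T})"
    if t: "t \<in> {0..T}" for t
  proof -
    have "((\<lambda>t. exp (l * t) * u t - I t) has_field_derivative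
        exp (l * t) * l * u t + x t * exp (l * t) - exp (l * t) * w t) (at t within {0..T})"
      unfolding u_def I_def
      by (intro DERIV_diff DERIV_mult integral_has_real_derivative[OF cx' t]
          integral_has_real_derivative[OF cw' t]) (auto intro!: derivative_eq_intros)
    moreover have "exp (l * t) * l * u t + x t * exp (l * t) - exp (l * t) * w t = 0"
      unfolding xu[OF t] by (simp add: algebra_simps)
    ultimately show ?thesis by simp
  qed
  have "\<exists>c. \<forall>t\<in>{0..T}. exp (l * t) * u t - I t = c"
    by (rule has_field_derivative_zero_constant[OF convex_real_interval(5) deriv0])
  then obtain c where "\<forall>t\<in>{0..T}. exp (l * t) * u t - I t = c" ..
  then have "exp (l * T) * u T - I T = exp (l * 0) * u 0 - I 0" using T by (metis atLeastAtMost_iff order_refl)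
  then have "u T = exp (- l * T) * I T"
    by (simp add: u_def I_def exp_minus field_simps)
  moreover have "I T = (LINT s:{0..T}|lborel. exp (l * s) * w s)"
    unfolding I_def by (rule set_integral_Icc_eq_integral[OF cw', symmetric])
  ultimately show ?thesis using xu[of T] T by (simp add: ou_path_def)
qed

lemma continuous_on_ou_path:
  assumes cont: "continuous_on {0..} w"
  shows "continuous_on {0..} (ou_path l w)"
proof (rule continuous_on_atLeast_if_atLeastAtMost)
  fix T :: real assume T: "T \<ge> 0"
  have cg: "continuous_on {0..T} (\<lambda>s. exp (l * s) * w s)"
    by (intro continuous_intros continuous_on_subset[OF cont]) auto
  have cc: "continuous_on {0..T} (\<lambda>t. w t - l * exp (- l * t) * integral {0..t} (\<lambda>s. exp (l * s) * w s))"
    by (intro continuous_intros continuous_on_subset[OF cont] indefinite_integral_continuous_1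
        integrable_continuous_real cg) auto
  have ie: "integral {0..t} (\<lambda>s. exp (l * s) * w s) = (LINT s:{0..t}|lborel. exp (l * s) * w s)"
    if "t \<in> {0..T}" for t
    using continuous_on_subset[OF cg, of "{0..t}"] that by (simp add: set_integral_Icc_eq_integral)
  show "continuous_on {0..T} (ou_path l w)"
    unfolding ou_path_def by (rule continuous_on_eq[OF cc]) (simp add: ie)
qed

lemma tendsto_floor_mult_div:
  fixes s :: real
  shows "(\<lambda>n. real_of_int \<lfloor>real (Suc n) * s\<rfloor> / real (Suc n)) \<longlonglongrightarrow> s"
proof (rule tendsto_sandwich[of "\<lambda>n. s - inverse (real (Suc n))" _ _ "\<lambda>n. s"])
  have "s - inverse (real (Suc n)) = (real (Suc n) * s - 1) / real (Suc n)"
    "s = (real (Suc n) * s) / real (Suc n)" for n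
    by (simp_all add: field_simps del: of_nat_Suc)
  then have "s - inverse (real (Suc n)) \<le> real_of_int \<lfloor>real (Suc n) * s\<rfloor> / real (Suc n)"
    "real_of_int \<lfloor>real (Suc n) * s\<rfloor> / real (Suc n) \<le> s" for n
    by (metis divide_right_mono of_nat_0_le_iff real_of_int_floor_ge_diff_one,
        metis divide_right_mono of_nat_0_le_iff of_int_floor_le)
  then show "\<forall>\<^sub>F n in sequentially. s - inverse (real (Suc n)) \<le> real_of_int \<lfloor>real (Suc n) * s\<rfloor> / real (Suc n)"
    "\<forall>\<^sub>F n in sequentially. real_of_int \<lfloor>real (Suc n) * s\<rfloor> / real (Suc n) \<le> s"
    by simp_all
  show "(\<lambda>n. s - inverse (real (Suc n))) \<longlonglongrightarrow> s"
    using tendsto_diff[OF tendsto_const LIMSEQ_inverse_real_of_nat, of s] by simp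
qed simp

text \<open>Approximate time from below by the grid points \<open>\<lfloor>n s\<rfloor>/n\<close>, which take countably many
  values.\<close>
lemma continuous_process_measurable_pair:
  fixes X :: "real \<Rightarrow> 'a \<Rightarrow> 'b::metric_space"
  assumes cont: "\<And>\<omega>. \<omega> \<in> space N \<Longrightarrow> continuous_on {0..} (\<lambda>s. X s \<omega>)"
    and meas: "\<And>s. s \<ge> 0 \<Longrightarrow> X s \<in> borel_measurable N"
  shows "(\<lambda>p. X (max 0 (snd p)) (fst p)) \<in> borel_measurable (N \<Otimes>\<^sub>M lborel)"
proof (rule borel_measurable_LIMSEQ_metric)
  define g where "g n s = max 0 (real_of_int \<lfloor>real (Suc n) * s\<rfloor> / real (Suc n))" for n s
  show "(\<lambda>p. X (g n (snd p)) (fst p)) \<in> borel_measurable (N \<Otimes>\<^sub>M lborel)" for n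
  proof -
    have "(\<lambda>p. X (max 0 (real_of_int k / real (Suc n))) (fst p)) \<in> borel_measurable (N \<Otimes>\<^sub>M lborel)"
      for k :: int
      by (rule measurable_compose[OF measurable_fst meas]) simp
    moreover have "(\<lambda>p. \<lfloor>real (Suc n) * snd p\<rfloor>) \<in> measurable (N \<Otimes>\<^sub>M lborel) (count_space UNIV)"
      by (rule measurable_compose[OF _ measurable_real_floor]) measurable
    ultimately show ?thesis
      unfolding g_def by (rule measurable_compose_countable)
  qed
  fix p :: "'a \<times> real" assume "p \<in> space (N \<Otimes>\<^sub>M lborel)"
  then have "fst p \<in> space N" by (auto simp: space_pair_measure)
  show "(\<lambda>n. X (g n (snd p)) (fst p)) \<longlonglongrightarrow> X (max 0 (snd p)) (fst p)"
  proof (rule continuous_on_tendsto_compose[OF cont[OF \<open>fst p \<in> space N\<close>]])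
    show "(\<lambda>n. g n (snd p)) \<longlonglongrightarrow> max 0 (snd p)"
      unfolding g_def by (intro tendsto_max tendsto_const tendsto_floor_mult_div)
  qed (auto simp: g_def)
qed

lemma ou_path_measurable:
  fixes X :: "real \<Rightarrow> 'a \<Rightarrow> real"
  assumes cont: "\<And>\<omega>. \<omega> \<in> space N \<Longrightarrow> continuous_on {0..} (\<lambda>s. X s \<omega>)"
    and meas: "\<And>s. s \<ge> 0 \<Longrightarrow> X s \<in> borel_measurable N" and t: "t \<ge> 0"
  shows "(\<lambda>\<omega>. ou_path l (\<lambda>s. X s \<omega>) t) \<in> borel_measurable N"
proof -
  have [measurable]: "(\<lambda>p. X (max 0 (snd p)) (fst p)) \<in> borel_measurable (N \<Otimes>\<^sub>M lborel)"
    by (rule continuous_process_measurable_pair[OF cont meas])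
  have eq: "(LINT s:{0..t}|lborel. exp (l * s) * X s \<omega>) =
      (\<integral>s. indicator {0..t} s *\<^sub>R (exp (l * s) * X (max 0 s) \<omega>) \<partial>lborel)" for \<omega>
    unfolding set_lebesgue_integral_def
    by (intro Bochner_Integration.integral_cong refl) (auto simp: indicator_def)
  have "(\<lambda>p. indicator {0..t} (snd p) *\<^sub>R (exp (l * snd p) * X (max 0 (snd p)) (fst p)))
      \<in> borel_measurable (N \<Otimes>\<^sub>M lborel)"
    by measurable
  then have "(\<lambda>\<omega>. \<integral>s. indicator {0..t} s *\<^sub>R (exp (l * s) * X (max 0 s) \<omega>) \<partial>lborel) \<in> borel_measurable N"
    by (intro lborel.borel_measurable_lebesgue_integral) (simp add: case_prod_beta')
  moreover have "X t \<in> borel_measurable N" by (rule meas[OF t])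
  ultimately show ?thesis unfolding ou_path_def eq by measurable
qed

lemma has_derivative_difference_quotients:
  fixes f :: "'a::real_normed_vector \<Rightarrow> 'b::real_normed_vector"
  assumes fd: "(f has_derivative D) (at x)" and v: "v \<noteq> 0"
  shows "(\<lambda>n. real (Suc n) *\<^sub>R (f (x + v /\<^sub>R real (Suc n)) - f x)) \<longlonglongrightarrow> D v"
proof -
  interpret D: bounded_linear D using fd by (rule has_derivative_bounded_linear)
  define h where "h n = v /\<^sub>R real (Suc n)" for n
  have "h \<longlonglongrightarrow> 0"
    unfolding h_def using tendsto_scaleR[OF LIMSEQ_inverse_real_of_nat tendsto_const, of v]
    by (simp add: divide_inverse_commute)
  moreover have "\<forall>n. h n \<noteq> 0" using v by (simp add: h_def)
  ultimately have "filterlim h (at 0) sequentially"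
    by (simp add: filterlim_at)
  from filterlim_compose[OF fd[unfolded has_derivative_at, THEN conjunct2] this]
  have q: "(\<lambda>n. norm (f (x + h n) - f x - D (h n)) / norm (h n)) \<longlonglongrightarrow> 0" .
  have "norm (real (Suc n) *\<^sub>R (f (x + h n) - f x) - D v) =
      norm v * (norm (f (x + h n) - f x - D (h n)) / norm (h n))" for n
  proof -
    have "real (Suc n) *\<^sub>R (f (x + h n) - f x) - D v = real (Suc n) *\<^sub>R (f (x + h n) - f x - D (h n))"
      by (simp add: h_def D.scaleR scaleR_diff_right)
    then have "norm (real (Suc n) *\<^sub>R (f (x + h n) - f x) - D v) = real (Suc n) * norm (f (x + h n) - f x - D (h n))"
      by simp
    moreover have "norm v * (N / norm (h n)) = real (Suc n) * N" for N
      using v by (simp add: h_def field_simps del: of_nat_Suc)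
    ultimately show ?thesis by simp
  qed
  then have "(\<lambda>n. norm (real (Suc n) *\<^sub>R (f (x + h n) - f x) - D v)) \<longlonglongrightarrow> 0"
    using tendsto_mult[OF tendsto_const q, of "norm v"] by simp
  then have "(\<lambda>n. real (Suc n) *\<^sub>R (f (x + h n) - f x) - D v) \<longlonglongrightarrow> 0"
    by (rule tendsto_norm_zero_cancel)
  then show ?thesis unfolding h_def by (rule LIM_zero_cancel)
qed

lemma admissible_drift_measurable:
  fixes b :: "real \<Rightarrow> 'a::{real_normed_vector,second_countable_topology} \<Rightarrow> 'b::{real_normed_vector,second_countable_topology}"
  assumes "admissible_drift b"
  shows "(\<lambda>p. if fst p \<in> {0..1} then b (fst p) (snd p) else 0) \<in> borel_measurable borel"
proof -
  have "({0..1::real} \<times> (UNIV::'a set)) \<inter> space borel \<in> sets borel"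
    by (simp add: borel_closed closed_Times)
  moreover have "(\<lambda>p. b (fst p) (snd p)) \<in> borel_measurable (restrict_space borel ({0..1} \<times> UNIV))"
    using assms unfolding admissible_drift_def by blast
  ultimately have "(\<lambda>p. if p \<in> {0..1} \<times> UNIV then b (fst p) (snd p) else 0) \<in> borel_measurable borel"
    by (subst measurable_restrict_space_iff[symmetric]) auto
  then show ?thesis by (simp add: mem_Times_iff)
qed

lemma admissible_drift_derivative_measurable:
  fixes b :: "real \<Rightarrow> 'a::{real_normed_vector,second_countable_topology} \<Rightarrow> 'b::{real_normed_vector,second_countable_topology}"
  assumes adm: "admissible_drift b" and v: "v \<noteq> 0"
  shows "(\<lambda>p. if fst p \<in> {0..1} then frechet_derivative (b (fst p)) (at (snd p)) v else 0)
    \<in> borel_measurable borel"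
proof (rule borel_measurable_LIMSEQ_metric)
  define b0 where "b0 p = (if fst p \<in> {0..1} then b (fst p) (snd p) else 0)" for p :: "real \<times> 'a"
  have [measurable]: "b0 \<in> borel_measurable borel"
    unfolding b0_def by (rule admissible_drift_measurable[OF adm])
  define g where "g n p = (if p \<in> {0..1} \<times> UNIV
      then real (Suc n) *\<^sub>R (b0 (fst p, snd p + v /\<^sub>R real (Suc n)) - b0 p) else 0)" for n p
  show "g n \<in> borel_measurable borel" for n
  proof -
    have "(\<lambda>p. b0 (fst p, snd p + v /\<^sub>R real (Suc n))) \<in> borel_measurable borel"
      by (rule measurable_compose[OF borel_measurable_continuous_onI]) (auto intro!: continuous_intros)
    moreover have "({0..1::real} \<times> (UNIV::'a set)) \<inter> space borel \<in> sets borel"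
      by (simp add: borel_closed closed_Times)
    ultimately show ?thesis unfolding g_def
      by (intro measurable_If_set) auto
  qed
  fix p :: "real \<times> 'a"
  show "(\<lambda>n. g n p) \<longlonglongrightarrow> (if fst p \<in> {0..1} then frechet_derivative (b (fst p)) (at (snd p)) v else 0)"
  proof (cases "fst p \<in> {0..1}")
    case True
    then obtain f' where f': "\<And>x. (b (fst p) has_derivative blinfun_apply (f' x)) (at x)"
      using adm unfolding admissible_drift_def C2_def by blast
    have "g n p = real (Suc n) *\<^sub>R (b (fst p) (snd p + v /\<^sub>R real (Suc n)) - b (fst p) (snd p))" for n
      using True by (simp add: g_def b0_def mem_Times_iff)
    then show ?thesis
      using True has_derivative_difference_quotients[OF f' v] frechet_derivative_at[OF f'] by simp
  next
    case False
    then have "g n p = 0" for n by (auto simp: g_def mem_Times_iff)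
    with False show ?thesis by auto
  qed
qed

lemma C2_compose_affine_line:
  fixes f :: "'a::real_normed_vector \<Rightarrow> 'b::real_normed_vector"
  assumes "C2 f"
  shows "C2 (\<lambda>y::real. f (y *\<^sub>R v + c))"
proof -
  obtain f' f'' where f': "\<And>x. (f has_derivative blinfun_apply (f' x)) (at x)"
    and f'': "\<And>x. (f' has_derivative blinfun_apply (f'' x)) (at x)"
    and cf'': "continuous_on UNIV f''"
    using assms unfolding C2_def by blast
  define a where "a y = y *\<^sub>R v + c" for y :: real
  have da: "(a has_derivative (\<lambda>h. h *\<^sub>R v)) (at y)" for y
    unfolding a_def by (auto intro!: derivative_eq_intros)
  define g' where "g' y = blinfun_scaleR_left (f' (a y) v)" for y
  define g'' where "g'' y = blinfun_scaleR_left (blinfun_scaleR_left (f'' (a y) v v))" for y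
  have "((\<lambda>y. f (a y)) has_derivative blinfun_apply (g' y)) (at y)" for y
    using has_derivative_compose[OF da f', of y]
    by (simp add: o_def g'_def blinfun.scaleR_right)
  moreover have "(g' has_derivative blinfun_apply (g'' y)) (at y)" for y
  proof -
    have "((\<lambda>y. f' (a y)) has_derivative (\<lambda>h. f'' (a y) (h *\<^sub>R v))) (at y)"
      using has_derivative_compose[OF da f'', of y] by (simp add: o_def)
    from bounded_bilinear.FDERIV[OF bounded_bilinear_blinfun_apply this has_derivative_const[of v]]
    have "((\<lambda>y. f' (a y) v) has_derivative (\<lambda>h. f'' (a y) (h *\<^sub>R v) v)) (at y)"
      by simp
    from bounded_linear.has_derivative[OF bounded_linear_blinfun_scaleR_left this]
    have "(g' has_derivative (\<lambda>h. blinfun_scaleR_left (f'' (a y) (h *\<^sub>R v) v))) (at y)"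
      unfolding g'_def .
    moreover have "(\<lambda>h. blinfun_scaleR_left (f'' (a y) (h *\<^sub>R v) v)) = blinfun_apply (g'' y)"
      by (auto simp: g''_def blinfun.scaleR_right blinfun.scaleR_left intro!: blinfun_eqI)
    ultimately show ?thesis by simp
  qed
  moreover have "continuous_on UNIV g''"
    unfolding g''_def a_def
    by (intro continuous_intros continuous_on_compose2[OF cf'']) auto
  ultimately show ?thesis unfolding C2_def a_def[symmetric] by blast
qed

lemma frechet_derivative_compose_affine_line:
  fixes f :: "'a::real_normed_vector \<Rightarrow> 'b::real_normed_vector"
  assumes "C2 f"
  shows "frechet_derivative (\<lambda>y::real. f (y *\<^sub>R v + c)) (at y) 1 = frechet_derivative f (at (y *\<^sub>R v + c)) v"
proof -
  obtain f' where f': "\<And>x. (f has_derivative blinfun_apply (f' x)) (at x)"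
    using assms unfolding C2_def by blast
  have "((\<lambda>y. y *\<^sub>R v + c) has_derivative (\<lambda>h. h *\<^sub>R v)) (at y)"
    by (auto intro!: derivative_eq_intros)
  from has_derivative_compose[OF this f']
  have "((\<lambda>y. f (y *\<^sub>R v + c)) has_derivative (\<lambda>h. f' (y *\<^sub>R v + c) (h *\<^sub>R v))) (at y)"
    by (simp add: o_def)
  from frechet_derivative_at[OF this] frechet_derivative_at[OF f'[of "y *\<^sub>R v + c"]]
  show ?thesis by (metis scaleR_one)
qed

lemma admissible_drift_along_line:
  fixes b :: "real \<Rightarrow> 'h::{real_normed_vector,second_countable_topology} \<Rightarrow> 'h"
  assumes adm: "admissible_drift b" and r: "continuous_on {0..1} r"
  shows "admissible_drift (\<lambda>t z::real. b t (z *\<^sub>R v + r t))"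
  unfolding admissible_drift_def
proof (intro conjI ballI allI)
  define A where "A = ({0..1} \<times> UNIV :: (real \<times> real) set)"
  define \<phi> where "\<phi> p = (fst p, snd p *\<^sub>R v + r (fst p))" for p :: "real \<times> real"
  have "continuous_on A \<phi>"
    unfolding \<phi>_def A_def
    by (intro continuous_intros continuous_on_compose2[OF r]) auto
  then have "\<phi> \<in> borel_measurable (restrict_space borel A)"
    by (rule borel_measurable_continuous_on_restrict)
  then have "\<phi> \<in> measurable (restrict_space borel A) (restrict_space borel ({0..1} \<times> UNIV))"
    by (rule measurable_restrict_space2[rotated]) (auto simp: \<phi>_def A_def space_restrict_space)
  moreover have "(\<lambda>p. b (fst p) (snd p)) \<in> borel_measurable (restrict_space borel ({0..1} \<times> UNIV))"
    using adm by (simp add: admissible_drift_def)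
  ultimately have "(\<lambda>p. b (fst (\<phi> p)) (snd (\<phi> p))) \<in> borel_measurable (restrict_space borel A)"
    by (rule measurable_compose)
  then show "(\<lambda>p. b (fst p) (snd p *\<^sub>R v + r (fst p))) \<in> borel_measurable (restrict_space borel ({0..1} \<times> UNIV))"
    by (simp add: \<phi>_def A_def)
next
  fix t assume "t \<in> {0..1::real}"
  with adm show "C2 (\<lambda>z::real. b t (z *\<^sub>R v + r t))"
    by (simp add: admissible_drift_def C2_compose_affine_line)
  fix z :: real
  from \<open>t \<in> {0..1}\<close> adm show "norm (b t (z *\<^sub>R v + r t)) \<le> 1"
    by (simp add: admissible_drift_def)
qed

lemma drift_derivative_integral_measurable:
  fixes b :: "real \<Rightarrow> 'h::{banach,second_countable_topology} \<Rightarrow> 'h"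
    and Y :: "real \<Rightarrow> 'a \<Rightarrow> 'h"
  assumes adm: "admissible_drift b" and v: "v \<noteq> 0"
    and cont: "\<And>\<omega>. \<omega> \<in> space N \<Longrightarrow> continuous_on {0..} (\<lambda>t. Y t \<omega>)"
    and meas: "\<And>t. t \<ge> 0 \<Longrightarrow> Y t \<in> borel_measurable N"
  shows "(\<lambda>\<omega>. LINT t:{0..1}|lborel. frechet_derivative (b t) (at (Y t \<omega>)) v) \<in> borel_measurable N"
proof -
  define Db where "Db p = (if fst p \<in> {0..1} then frechet_derivative (b (fst p)) (at (snd p)) v else 0)"
    for p :: "real \<times> 'h"
  have [measurable]: "Db \<in> borel_measurable borel"
    unfolding Db_def by (rule admissible_drift_derivative_measurable[OF adm v])
  have [measurable]: "(\<lambda>q. Y (max 0 (snd q)) (fst q)) \<in> borel_measurable (N \<Otimes>\<^sub>M lborel)"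
    by (rule continuous_process_measurable_pair[OF cont meas])
  have "(\<lambda>q. (snd q, Y (max 0 (snd q)) (fst q))) \<in> measurable (N \<Otimes>\<^sub>M lborel) (borel :: (real \<times> 'h) measure)"
    unfolding borel_prod[symmetric] by measurable
  then have joint: "(\<lambda>q. indicator {0..1} (snd q) *\<^sub>R Db (snd q, Y (max 0 (snd q)) (fst q)))
      \<in> borel_measurable (N \<Otimes>\<^sub>M lborel)"
    by measurable
  have "(\<lambda>\<omega>. \<integral>t. indicator {0..1} t *\<^sub>R Db (t, Y (max 0 t) \<omega>) \<partial>lborel) \<in> borel_measurable N"
    by (rule lborel.borel_measurable_lebesgue_integral) (use joint in \<open>simp add: case_prod_beta'\<close>)
  moreover have "(LINT t:{0..1}|lborel. frechet_derivative (b t) (at (Y t \<omega>)) v)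
      = (\<integral>t. indicator {0..1} t *\<^sub>R Db (t, Y (max 0 t) \<omega>) \<partial>lborel)" for \<omega>
    unfolding set_lebesgue_integral_def Db_def
    by (intro Bochner_Integration.integral_cong refl) (auto simp: indicator_def)
  ultimately show ?thesis by simp
qed

definition drift_exp_integrand :: "real \<Rightarrow> (real \<Rightarrow> 'x::real_normed_vector \<Rightarrow> 'h::{banach,second_countable_topology})
    \<Rightarrow> (real \<Rightarrow> 'x) \<Rightarrow> 'x \<Rightarrow> ennreal" where
  "drift_exp_integrand a b y v = ennreal (exp (a * (norm (LINT t:{0..1}|lborel. frechet_derivative (b t) (at (y t)) v))\<^sup>2))"

lemma drift_exp_integrand_cong:
  assumes "\<And>t. t \<in> {0..1} \<Longrightarrow> y t = y' t"
  shows "drift_exp_integrand a b y v = drift_exp_integrand a b y' v"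
proof -
  have "(LINT t:{0..1}|lborel. frechet_derivative (b t) (at (y t)) v) =
      (LINT t:{0..1}|lborel. frechet_derivative (b t) (at (y' t)) v)"
    using assms by (intro set_lebesgue_integral_cong) auto
  then show ?thesis by (simp add: drift_exp_integrand_def)
qed

lemma drift_exp_integrand_along_line:
  assumes adm: "admissible_drift b"
  shows "drift_exp_integrand a (\<lambda>t z::real. b t (z *\<^sub>R v + r t)) y 1 = drift_exp_integrand a b (\<lambda>t. y t *\<^sub>R v + r t) v"
proof -
  have "(LINT t:{0..1}|lborel. frechet_derivative (\<lambda>z. b t (z *\<^sub>R v + r t)) (at (y t)) 1) =
      (LINT t:{0..1}|lborel. frechet_derivative (b t) (at (y t *\<^sub>R v + r t)) v)"
    using adm by (intro set_lebesgue_integral_cong)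
      (auto simp: admissible_drift_def frechet_derivative_compose_affine_line)
  then show ?thesis by (simp add: drift_exp_integrand_def)
qed

lemma drift_exp_integrand_measurable:
  fixes b :: "real \<Rightarrow> 'h::{banach,second_countable_topology} \<Rightarrow> 'h"
  assumes "admissible_drift b" "v \<noteq> 0"
    and "\<And>\<omega>. \<omega> \<in> space N \<Longrightarrow> continuous_on {0..} (\<lambda>t. Y t \<omega>)"
    and "\<And>t. t \<ge> 0 \<Longrightarrow> Y t \<in> borel_measurable N"
  shows "(\<lambda>\<omega>. drift_exp_integrand a b (\<lambda>t. Y t \<omega>) v) \<in> borel_measurable N"
  using drift_derivative_integral_measurable[OF assms] unfolding drift_exp_integrand_def by measurable

section \<open>Independence\<close>

text \<open>Independence makes the law of \<open>\<omega> \<mapsto> (\<omega>, \<omega>)\<close> on \<open>S \<Otimes> T\<close> the product of its marginals,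
  so Tonelli applies.\<close>
lemma (in prob_space) indep_set_nn_integral_diag_le:
  assumes S: "sets S \<subseteq> sets M" "space S = space M"
    and T: "sets T \<subseteq> sets M" "space T = space M"
    and ind: "indep_set (sets S) (sets T)"
    and f: "f \<in> borel_measurable (S \<Otimes>\<^sub>M T)"
    and bnd: "\<And>y. y \<in> space M \<Longrightarrow> (\<integral>\<^sup>+x. f (x, y) \<partial>M) \<le> c"
  shows "(\<integral>\<^sup>+x. f (x, x) \<partial>M) \<le> c"
proof -
  have idS: "(\<lambda>x. x) \<in> measurable M S"
    by (rule measurableI) (use S sets.sets_into_space in auto)
  have idT: "(\<lambda>x. x) \<in> measurable M T"
    by (rule measurableI) (use T sets.sets_into_space in auto)
  have "{(\<lambda>x. x) -` A \<inter> space M | A. A \<in> sets S} = sets S"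
    using S sets.sets_into_space[of _ S] by (auto intro!: exI)
  moreover have "{(\<lambda>x. x) -` A \<inter> space M | A. A \<in> sets T} = sets T"
    using T sets.sets_into_space[of _ T] by (auto intro!: exI)
  ultimately have "indep_var S (\<lambda>x. x) T (\<lambda>x. x)"
    unfolding indep_var_eq
    using idS idT ind S(2) T(2) sets.sigma_sets_eq[of S] sets.sigma_sets_eq[of T] by simp
  then have D: "distr M S (\<lambda>x. x) \<Otimes>\<^sub>M distr M T (\<lambda>x. x) = distr M (S \<Otimes>\<^sub>M T) (\<lambda>x. (x, x))"
    using indep_var_distribution_eq by blast
  interpret PS: prob_space "distr M S (\<lambda>x. x)" by (rule prob_space_distr[OF idS])
  interpret PT: prob_space "distr M T (\<lambda>x. x)" by (rule prob_space_distr[OF idT])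
  interpret PST: pair_prob_space "distr M S (\<lambda>x. x)" "distr M T (\<lambda>x. x)" ..
  have diag: "(\<lambda>x. (x, x)) \<in> measurable M (S \<Otimes>\<^sub>M T)"
    using idS idT by (rule measurable_Pair)
  have "(\<integral>\<^sup>+x. f (x, x) \<partial>M) = (\<integral>\<^sup>+p. f p \<partial>(distr M S (\<lambda>x. x) \<Otimes>\<^sub>M distr M T (\<lambda>x. x)))"
    by (simp add: D nn_integral_distr[OF diag] f)
  also have "\<dots> = (\<integral>\<^sup>+y. (\<integral>\<^sup>+x. f (x, y) \<partial>distr M S (\<lambda>x. x)) \<partial>distr M T (\<lambda>x. x))"
    by (rule PST.nn_integral_snd[symmetric]) (simp add: f cong: measurable_cong_sets)
  also have "\<dots> \<le> (\<integral>\<^sup>+y. c \<partial>distr M T (\<lambda>x. x))"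
  proof (rule nn_integral_mono)
    fix y assume "y \<in> space (distr M T (\<lambda>x. x))"
    then have y: "y \<in> space M" using T by simp
    have "(\<lambda>x. f (x, y)) \<in> borel_measurable S"
      by (rule measurable_compose[OF _ f], rule measurable_Pair) (use y T in auto)
    then show "(\<integral>\<^sup>+x. f (x, y) \<partial>distr M S (\<lambda>x. x)) \<le> c"
      using bnd[OF y] by (simp add: nn_integral_distr[OF idS])
  qed
  also have "\<dots> = c" using PT.emeasure_space_1 by simp
  finally show ?thesis .
qed

definition null_augment :: "'a measure \<Rightarrow> 'a measure \<Rightarrow> 'a measure" where
  "null_augment M T = sigma (space M)
     {A \<in> sets M. \<exists>A'\<in>sets T. \<exists>N\<in>null_sets M. (A - A') \<union> (A' - A) \<subseteq> N}"

lemma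
  shows space_null_augment: "space (null_augment M T) = space M"
    and sets_null_augment: "sets (null_augment M T) =
      sigma_sets (space M) {A \<in> sets M. \<exists>A'\<in>sets T. \<exists>N\<in>null_sets M. (A - A') \<union> (A' - A) \<subseteq> N}"
    and sets_null_augment_subset: "sets (null_augment M T) \<subseteq> sets M"
proof -
  have "{A \<in> sets M. \<exists>A'\<in>sets T. \<exists>N\<in>null_sets M. (A - A') \<union> (A' - A) \<subseteq> N} \<subseteq> Pow (space M)"
    using sets.sets_into_space by auto
  then show "space (null_augment M T) = space M"
    and sets: "sets (null_augment M T) =
      sigma_sets (space M) {A \<in> sets M. \<exists>A'\<in>sets T. \<exists>N\<in>null_sets M. (A - A') \<union> (A' - A) \<subseteq> N}"
    unfolding null_augment_def by (simp_all add: space_measure_of sets_measure_of)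
  show "sets (null_augment M T) \<subseteq> sets M"
    unfolding sets by (rule sets.sigma_sets_subset) auto
qed

lemma (in prob_space) indep_set_null_augment:
  assumes S: "sets S \<subseteq> sets M" "space S = space M"
    and T: "sets T \<subseteq> sets M"
    and ind: "indep_set (sets S) (sets T)"
  shows "indep_set (sets S) (sets (null_augment M T))"
proof -
  define G where "G = {A \<in> sets M. \<exists>A'\<in>sets T. \<exists>N\<in>null_sets M. (A - A') \<union> (A' - A) \<subseteq> N}"
  have "indep_set (sets S) G"
  proof (rule indep_setI)
    show "sets S \<subseteq> events" "G \<subseteq> events" using S by (auto simp: G_def)
    fix a g assume a: "a \<in> sets S" and "g \<in> G"
    then obtain g' N where g: "g \<in> sets M" "g' \<in> sets T" "N \<in> null_sets M" "(g - g') \<union> (g' - g) \<subseteq> N"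
      unfolding G_def by blast
    have "AE x in M. x \<in> g \<longleftrightarrow> x \<in> g'"
      using AE_not_in[OF g(3)] by eventually_elim (use g(4) in blast)
    then have "prob (a \<inter> g) = prob (a \<inter> g')" "prob g = prob g'"
      using a g S T by (auto intro!: measure_eq_AE)
    then show "prob (a \<inter> g) = prob a * prob g"
      using indep_setD[OF ind a g(2)] by simp
  qed
  moreover have "Int_stable G"
  proof (rule Int_stableI)
    fix A B assume "A \<in> G" "B \<in> G"
    then obtain A' NA B' NB where
      A: "A \<in> sets M" "A' \<in> sets T" "NA \<in> null_sets M" "(A - A') \<union> (A' - A) \<subseteq> NA" and
      B: "B \<in> sets M" "B' \<in> sets T" "NB \<in> null_sets M" "(B - B') \<union> (B' - B) \<subseteq> NB"
      unfolding G_def by blast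
    have "A' \<inter> B' \<in> sets T" "NA \<union> NB \<in> null_sets M" using A B by auto
    moreover have "((A \<inter> B) - (A' \<inter> B')) \<union> ((A' \<inter> B') - (A \<inter> B)) \<subseteq> NA \<union> NB"
      using A B by blast
    ultimately show "A \<inter> B \<in> G" using A B unfolding G_def by blast
  qed
  ultimately have "indep_set (sigma_sets (space M) (sets S)) (sigma_sets (space M) G)"
    by (intro indep_set_sigma_sets) (auto simp: Int_stable_def)
  then show ?thesis using S sets.sigma_sets_eq[of S] by (simp add: sets_null_augment G_def)
qed

lemma measurable_null_augment_if_AE_eq:
  fixes g h :: "'a \<Rightarrow> 'b::topological_space"
  assumes g: "g \<in> borel_measurable M" and h: "h \<in> borel_measurable T"
    and T: "space T = space M"
    and ae: "AE x in M. g x = h x"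
  shows "g \<in> borel_measurable (null_augment M T)"
proof (rule measurableI)
  fix A :: "'b set" assume A: "A \<in> sets borel"
  obtain N where N: "N \<in> null_sets M" "{x \<in> space M. g x \<noteq> h x} \<subseteq> N"
    using ae by (auto elim!: AE_E)
  have "g -` A \<inter> space M \<in> sets M" "h -` A \<inter> space T \<in> sets T"
    using g h A by (auto intro: measurable_sets)
  moreover have "(g -` A \<inter> space M - h -` A \<inter> space T) \<union> (h -` A \<inter> space T - g -` A \<inter> space M) \<subseteq> N"
    using N T by auto
  ultimately show "g -` A \<inter> space (null_augment M T) \<in> sets (null_augment M T)"
    unfolding space_null_augment sets_null_augment using N(1)
    by (intro sigma_sets.Basic) blast
qed simp

section \<open>Splitting off one coordinate\<close>

definition path_algebra :: "'w measure \<Rightarrow> (nat \<Rightarrow> real \<Rightarrow> 'w \<Rightarrow> real) \<Rightarrow> nat set \<Rightarrow> 'w measure" where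
  "path_algebra M B I = vimage_algebra (space M) (\<lambda>\<omega>. restrict (\<lambda>n. restrict (\<lambda>t. B n t \<omega>) {0..}) I)
     (Pi\<^sub>M I (\<lambda>_. Pi\<^sub>M {0..} (\<lambda>_. borel)))"

lemma space_path_algebra [simp]: "space (path_algebra M B I) = space M"
  by (simp add: path_algebra_def)

lemma path_algebra_measurable:
  assumes n: "n \<in> I" and s: "s \<ge> 0"
  shows "B n s \<in> borel_measurable (path_algebra M B I)"
proof -
  let ?U = "\<lambda>\<omega>. restrict (\<lambda>n. restrict (\<lambda>t. B n t \<omega>) {0..}) I"
  have "?U \<in> space M \<rightarrow> space (Pi\<^sub>M I (\<lambda>_. Pi\<^sub>M {0..} (\<lambda>_. borel :: real measure)))"
    by (auto simp: space_PiM)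
  then have "?U \<in> measurable (path_algebra M B I) (Pi\<^sub>M I (\<lambda>_. Pi\<^sub>M {0..} (\<lambda>_. borel)))"
    unfolding path_algebra_def by (rule measurable_vimage_algebra1)
  then have "(\<lambda>\<omega>. ?U \<omega> n) \<in> measurable (path_algebra M B I) (Pi\<^sub>M {0..} (\<lambda>_. borel))"
    by (rule measurable_compose[OF _ measurable_component_singleton[OF n]])
  then have "(\<lambda>\<omega>. ?U \<omega> n s) \<in> borel_measurable (path_algebra M B I)"
    by (rule measurable_compose[OF _ measurable_component_singleton]) (use s in simp)
  moreover have "(\<lambda>\<omega>. ?U \<omega> n s) = B n s"
    using n s by auto
  ultimately show ?thesis by simp
qed

lemma (in prob_space)
  assumes BM: "cyl_BM M F B"
  shows sets_path_algebra_subset: "sets (path_algebra M B I) \<subseteq> sets M"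
    and indep_set_path_algebra: "I \<inter> J = {} \<Longrightarrow>
      indep_set (sets (path_algebra M B I)) (sets (path_algebra M B J))"
proof -
  define M' where "M' = (\<lambda>_::nat. Pi\<^sub>M {0..} (\<lambda>_::real. borel :: real measure))"
  define U where "U I \<omega> = restrict (\<lambda>n. restrict (\<lambda>t. B n t \<omega>) {0..}) I" for I \<omega>
  have indv: "indep_vars M' (\<lambda>n \<omega>. restrict (\<lambda>t. B n t \<omega>) {0..}) UNIV"
    using BM by (simp add: cyl_BM_def M'_def)
  have sets_eq: "sets (path_algebra M B I) =
      sigma_sets (space M) {U I -` A \<inter> space M | A. A \<in> sets (Pi\<^sub>M I M')}" for I
    unfolding path_algebra_def U_def M'_def by (rule sets_vimage_algebra)
  have "random_variable (Pi\<^sub>M I M') (U I)"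
    using indv unfolding indep_vars_def U_def by (intro measurable_restrict) auto
  then show "sets (path_algebra M B I) \<subseteq> sets M"
    unfolding sets_eq by (intro sets.sigma_sets_subset) (auto intro: measurable_sets)
  assume "I \<inter> J = {}"
  then have "indep_var (Pi\<^sub>M I M') (U I) (Pi\<^sub>M J M') (U J)"
    using indep_var_restrict[OF indv, of I J] unfolding U_def[abs_def] by simp
  then show "indep_set (sets (path_algebra M B I)) (sets (path_algebra M B J))"
    unfolding indep_var_eq sets_eq by simp
qed

lemma OU_H_solution_coordinate:
  fixes e :: "nat \<Rightarrow> 'h::{real_inner,second_countable_topology}"
  assumes OU: "OU_H_solution M F e lam B Z"
  shows "OU_solution M F (lam i) (B i) (\<lambda>t \<omega>. Z t \<omega> \<bullet> e i)"
  unfolding OU_solution_def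
proof (intro conjI ballI)
  show "adapted F (\<lambda>t \<omega>. Z t \<omega> \<bullet> e i)"
    unfolding adapted_def
  proof (intro allI impI)
    fix t :: real assume "0 \<le> t"
    then have "Z t \<in> borel_measurable (F t)" using OU by (simp add: OU_H_solution_def adapted_def)
    then show "(\<lambda>\<omega>. Z t \<omega> \<bullet> e i) \<in> borel_measurable (F t)" by measurable
  qed
  show "continuous_on {0..} (\<lambda>t. Z t \<omega> \<bullet> e i)" if "\<omega> \<in> space M" for \<omega>
    using OU that unfolding OU_H_solution_def by (intro continuous_intros) auto
  show "AE \<omega> in M. \<forall>t\<ge>0. Z t \<omega> \<bullet> e i = - lam i * (LINT s:{0..t}|lborel. Z s \<omega> \<bullet> e i) + B i t \<omega>"
    using OU by (simp add: OU_H_solution_def)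
qed

lemma OU_solution_eq_ou_path:
  assumes W: "std_BM N G W" and Y: "OU_solution N G l W Y"
  shows "AE \<omega> in N. \<forall>t\<ge>0. Y t \<omega> = ou_path l (\<lambda>s. W s \<omega>) t"
  using AE_space Y[unfolded OU_solution_def, THEN conjunct2, THEN conjunct2]
proof eventually_elim
  case (elim \<omega>)
  moreover have "continuous_on {0..} (\<lambda>t. Y t \<omega>)" "continuous_on {0..} (\<lambda>t. W t \<omega>)"
    using Y W elim unfolding OU_solution_def std_BM_def by auto
  ultimately show ?case
    using integral_equation_solution_eq_ou_path by blast
qed


lemma OU_H_solution_measurable:
  assumes filt: "filtration_on M F" and OU: "OU_H_solution M F e lam B Z" and t: "t \<ge> 0"
  shows "Z t \<in> borel_measurable M"
proof -
  have "Z t \<in> borel_measurable (F t)" using OU t by (simp add: OU_H_solution_def adapted_def)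
  moreover have "subalgebra M (F t)" using filt by (simp add: filtration_on_def)
  ultimately show ?thesis by (rule measurable_from_subalg[rotated])
qed

lemma OU_H_solution_coordinate_eq_ou_path:
  fixes e :: "nat \<Rightarrow> 'h::{real_inner,second_countable_topology}"
  assumes BM: "cyl_BM M F B" and OU: "OU_H_solution M F e lam B Z"
  shows "AE \<omega> in M. \<forall>t\<ge>0. Z t \<omega> \<bullet> e j = ou_path (lam j) (\<lambda>s. B j s \<omega>) t"
  using OU_solution_eq_ou_path[OF _ OU_H_solution_coordinate[OF OU]] BM
  unfolding cyl_BM_def by blast

lemma ou_path_path_algebra_measurable:
  assumes BM: "cyl_BM M F B" and j: "j \<in> I" and t: "t \<ge> 0"
  shows "(\<lambda>\<omega>. ou_path l (\<lambda>s. B j s \<omega>) t) \<in> borel_measurable (path_algebra M B I)"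
  using BM j t path_algebra_measurable[OF j]
  by (intro ou_path_measurable[where X="B j"]) (auto simp: cyl_BM_def std_BM_def)

text \<open>The residual of \<open>Z\<close> after removing the \<open>i\<close>-th coordinate is a functional of the \<open>B\<^sub>j\<close>,
  \<open>j \<noteq> i\<close>, only up to a null set.\<close>
lemma OU_H_solution_residual_measurable:
  fixes e :: "nat \<Rightarrow> 'h::{real_inner,banach,second_countable_topology}"
  assumes filt: "filtration_on M F"
    and orth: "\<And>i j. e i \<bullet> e j = (if i = j then 1 else 0)"
    and total: "closure (span (range e)) = UNIV"
    and BM: "cyl_BM M F B" and OU: "OU_H_solution M F e lam B Z" and t: "t \<ge> 0"
  shows "(\<lambda>\<omega>. Z t \<omega> - (Z t \<omega> \<bullet> e i) *\<^sub>R e i) \<in> borel_measurable (null_augment M (path_algebra M B (-{i})))"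
proof (rule borel_measurable_orthonormal_coordinates[OF orth total])
  fix j
  have "(\<lambda>\<omega>. Z t \<omega> \<bullet> e j) \<in> borel_measurable (null_augment M (path_algebra M B (-{i})))" if "j \<noteq> i"
    using OU_H_solution_coordinate_eq_ou_path[OF BM OU, of j] t that
      OU_H_solution_measurable[OF filt OU t] ou_path_path_algebra_measurable[OF BM, of j "-{i}" t]
    by (intro measurable_null_augment_if_AE_eq[where h="\<lambda>\<omega>. ou_path (lam j) (\<lambda>s. B j s \<omega>) t"]) auto
  then show "(\<lambda>\<omega>. (Z t \<omega> - (Z t \<omega> \<bullet> e i) *\<^sub>R e i) \<bullet> e j)
      \<in> borel_measurable (null_augment M (path_algebra M B (-{i})))"
    by (cases "j = i") (auto simp: inner_diff_left orth)
qed

lemma OU_H_solution_split_coordinate: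
  fixes e :: "nat \<Rightarrow> 'h::{real_inner,banach,second_countable_topology}"
  assumes prob: "prob_space M" and filt: "filtration_on M F"
    and orth: "\<And>i j. e i \<bullet> e j = (if i = j then 1 else 0)"
    and total: "closure (span (range e)) = UNIV"
    and BM: "cyl_BM M F B" and OU: "OU_H_solution M F e lam B Z"
  obtains S T :: "'w measure" and X :: "real \<Rightarrow> 'w \<Rightarrow> real" and R :: "real \<Rightarrow> 'w \<Rightarrow> 'h"
  where "sets S \<subseteq> sets M" "space S = space M" "sets T \<subseteq> sets M" "space T = space M"
    "prob_space.indep_set M (sets S) (sets T)"
    "\<And>t. t \<ge> 0 \<Longrightarrow> X t \<in> borel_measurable S"
    "\<And>\<omega>. \<omega> \<in> space M \<Longrightarrow> continuous_on {0..} (\<lambda>t. X t \<omega>)"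
    "\<And>t. t \<ge> 0 \<Longrightarrow> R t \<in> borel_measurable T"
    "\<And>\<omega>. \<omega> \<in> space M \<Longrightarrow> continuous_on {0..} (\<lambda>t. R t \<omega>)"
    "AE \<omega> in M. \<forall>t\<ge>0. Z t \<omega> \<bullet> e i = X t \<omega> \<and> Z t \<omega> = X t \<omega> *\<^sub>R e i + R t \<omega>"
proof -
  interpret prob_space M by (rule prob)
  define X where "X t \<omega> = ou_path (lam i) (\<lambda>s. B i s \<omega>) t" for t \<omega>
  define R where "R t \<omega> = Z t \<omega> - (Z t \<omega> \<bullet> e i) *\<^sub>R e i" for t \<omega>
  have S: "sets (path_algebra M B {i}) \<subseteq> sets M" "space (path_algebra M B {i}) = space M"
    using sets_path_algebra_subset[OF BM] by auto
  have indep: "indep_set (sets (path_algebra M B {i})) (sets (null_augment M (path_algebra M B (-{i}))))"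
    using S indep_set_path_algebra[OF BM, of "{i}" "-{i}"]
    by (intro indep_set_null_augment sets_path_algebra_subset[OF BM]) auto
  have X: "t \<ge> 0 \<Longrightarrow> X t \<in> borel_measurable (path_algebra M B {i})" for t
    unfolding X_def by (rule ou_path_path_algebra_measurable[OF BM]) auto
  have R: "t \<ge> 0 \<Longrightarrow> R t \<in> borel_measurable (null_augment M (path_algebra M B (-{i})))" for t
    unfolding R_def by (rule OU_H_solution_residual_measurable[OF filt orth total BM OU])
  have split: "AE \<omega> in M. \<forall>t\<ge>0. Z t \<omega> \<bullet> e i = X t \<omega> \<and> Z t \<omega> = X t \<omega> *\<^sub>R e i + R t \<omega>"
    using OU_H_solution_coordinate_eq_ou_path[OF BM OU, of i]
    by eventually_elim (simp add: X_def R_def)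
  have Xcont: "\<omega> \<in> space M \<Longrightarrow> continuous_on {0..} (\<lambda>t. X t \<omega>)" for \<omega>
    using BM unfolding X_def cyl_BM_def std_BM_def by (intro continuous_on_ou_path) auto
  have Rcont: "\<omega> \<in> space M \<Longrightarrow> continuous_on {0..} (\<lambda>t. R t \<omega>)" for \<omega>
    using OU unfolding R_def OU_H_solution_def by (intro continuous_intros) auto
  show thesis
    by (rule that[OF S sets_null_augment_subset space_null_augment indep X Xcont R Rcont split])
qed

theorem lemma2p2:
  fixes M :: "'w measure" and F :: "real \<Rightarrow> 'w measure"
    and e :: "nat \<Rightarrow> 'h::{real_inner, banach, second_countable_topology}"
    and lam :: "nat \<Rightarrow> real"
    and B :: "nat \<Rightarrow> real \<Rightarrow> 'w \<Rightarrow> real"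
    and Z :: "real \<Rightarrow> 'w \<Rightarrow> 'h"
    and C :: real and \<alpha> :: "real \<Rightarrow> real"
  assumes prob: "prob_space M"
    and filt: "filtration_on M F" and usual: "usual_conditions M F"
    and onb_orth: "\<And>i j. e i \<bullet> e j = (if i = j then 1 else 0)"
    and onb_total: "closure (span (range e)) = UNIV"
    and lam_pos: "\<And>n. lam n > 0"
    and trace_class: "summable (\<lambda>n. 1 / lam n)"
    and BM: "cyl_BM M F B"
    and OU: "OU_H_solution M F e lam B Z"
    and C_le: "C \<le> 3"
    and alpha_pos: "\<And>l. l > 0 \<Longrightarrow> \<alpha> l > 0"
    and hyp: "\<And>l (N :: 'w measure) G W Y (b :: real \<Rightarrow> real \<Rightarrow> 'h).
       l > 0 \<Longrightarrow> prob_space N \<Longrightarrow> filtration_on N G \<Longrightarrow> std_BM N G W \<Longrightarrow>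
       OU_solution N G l W Y \<Longrightarrow> admissible_drift b \<Longrightarrow>
       (\<integral>\<^sup>+ \<omega>. ennreal (exp (\<alpha> l *
           (norm (LINT t:{0..1}|lborel. frechet_derivative (b t) (at (Y t \<omega>)) 1))\<^sup>2)) \<partial>N)
         \<le> ennreal C"
  shows "\<forall>b :: real \<Rightarrow> 'h \<Rightarrow> 'h. admissible_drift b \<longrightarrow>
           (\<forall>i. (\<integral>\<^sup>+ \<omega>. ennreal (exp (\<alpha> (lam i) *
              (norm (LINT t:{0..1}|lborel. frechet_derivative (b t) (at (Z t \<omega>)) (e i)))\<^sup>2)) \<partial>M)
            \<le> ennreal C)"
proof (intro allI impI)
  fix b :: "real \<Rightarrow> 'h \<Rightarrow> 'h" and i :: nat
  assume adm: "admissible_drift b"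
  interpret prob_space M by (rule prob)
  obtain S T X R where S: "sets S \<subseteq> sets M" "space S = space M"
    and T: "sets T \<subseteq> sets M" "space T = space M" and indep: "indep_set (sets S) (sets T)"
    and X: "\<And>t. t \<ge> 0 \<Longrightarrow> X t \<in> borel_measurable S" "\<And>\<omega>. \<omega> \<in> space M \<Longrightarrow> continuous_on {0..} (\<lambda>t. X t \<omega>)"
    and R: "\<And>t. t \<ge> 0 \<Longrightarrow> R t \<in> borel_measurable T" "\<And>\<omega>. \<omega> \<in> space M \<Longrightarrow> continuous_on {0..} (\<lambda>t. R t \<omega>)"
    and split: "AE \<omega> in M. \<forall>t\<ge>0. Z t \<omega> \<bullet> e i = X t \<omega> \<and> Z t \<omega> = X t \<omega> *\<^sub>R e i + R t \<omega>"
    using OU_H_solution_split_coordinate[OF prob filt onb_orth onb_total BM OU, of i] by blast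
  let ?E = "\<lambda>y. drift_exp_integrand (\<alpha> (lam i)) b y (e i)"
  have "e i \<noteq> 0" using onb_orth[of i i] by auto
  then have meas: "(\<lambda>p. ?E (\<lambda>t. X t (fst p) *\<^sub>R e i + R t (snd p))) \<in> borel_measurable (S \<Otimes>\<^sub>M T)"
    using S T X R
    by (intro drift_exp_integrand_measurable[OF adm]) (auto simp: space_pair_measure intro!: continuous_intros)
  have "(\<integral>\<^sup>+x. ?E (\<lambda>t. X t x *\<^sub>R e i + R t y) \<partial>M) \<le> C" if y: "y \<in> space M" for y
  proof -
    have "(\<integral>\<^sup>+x. ?E (\<lambda>t. X t x *\<^sub>R e i + R t y) \<partial>M) =
        (\<integral>\<^sup>+x. drift_exp_integrand (\<alpha> (lam i)) (\<lambda>t z. b t (z *\<^sub>R e i + R t y)) (\<lambda>t. Z t x \<bullet> e i) 1 \<partial>M)"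
      by (rule nn_integral_cong_AE, use split in eventually_elim)
        (subst drift_exp_integrand_along_line[OF adm], rule drift_exp_integrand_cong, auto)
    also have "\<dots> \<le> C"
      using hyp[OF lam_pos prob filt _ OU_H_solution_coordinate[OF OU]
          admissible_drift_along_line[OF adm continuous_on_subset[OF R(2)[OF y]]]] BM
      by (auto simp: cyl_BM_def drift_exp_integrand_def)
    finally show ?thesis .
  qed
  then have "(\<integral>\<^sup>+x. ?E (\<lambda>t. X t x *\<^sub>R e i + R t x) \<partial>M) \<le> C"
    using indep_set_nn_integral_diag_le[OF S T indep meas] by simp
  moreover have "(\<integral>\<^sup>+\<omega>. ?E (\<lambda>t. Z t \<omega>) \<partial>M) = (\<integral>\<^sup>+x. ?E (\<lambda>t. X t x *\<^sub>R e i + R t x) \<partial>M)"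
    by (rule nn_integral_cong_AE, use split in eventually_elim) (rule drift_exp_integrand_cong, auto)
  ultimately show "(\<integral>\<^sup>+ \<omega>. ennreal (exp (\<alpha> (lam i) *
      (norm (LINT t:{0..1}|lborel. frechet_derivative (b t) (at (Z t \<omega>)) (e i)))\<^sup>2)) \<partial>M) \<le> ennreal C"
    by (simp add: drift_exp_integrand_def)
qed

end
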